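(* Let $\mathcal{X},\mathcal{Y}$ be Banach spaces, $\mathcal{A}:\mathcal{X}\to\mathcal{Y}$ a bounded linear operator, $\mathcal{R}:\mathcal{X}\to[0,\infty)$ and $\mathcal{D}:\mathcal{Y}\times\mathcal{Y}\to[0,\infty)$, and for $\alpha>0$, $y\in\mathcal{Y}$ let $\mathcal{J}_{\alpha,y}(x)=\alpha\mathcal{R}(x)+\mathcal{D}(\mathcal{A}x,y)$. Assume: (1) $\mathcal{X}$ is reflexive; (2) $\mathcal{R}$ is weakly sequentially lower semicontinuous; (3) $\mathcal{R}=R_{wc}+R_{sc}$, where $R_{wc}:\mathcal{X}\to[0,\infty)$ is $\gamma$-weakly convex, $R_{sc}$ is $\mu$-strongly convex, and either (a) $\gamma\le\mu$, or (b) $\mu<\gamma<2\mu$ and $R_{sc}-\frac{\mu}{2}\|\cdot\|_{\mathcal{X}}^2$ is weakly sequentially lower semicontinuous; (4) $\mathcal{D}$ is weakly sequentially lower semicontinuous, convex in its first argument, continuous in its second argument, and $\mathcal{D}(y_1,y_2)=0$ if and only if $y_1=y_2$; (5) there exist $C>0$ and $p\ge1$ such that for all $y_1,y_2,y_3\in\mathcal{Y}$, $\mathcal{D}(y_1,y_2)\le C(\mathcal{D}(y_1,y_3)+\|y_2-y_3\|_{\mathcal{Y}}^p)$. Then for all $\alpha>0$ and $y^\delta\in\mathcal{Y}$, the set of critical points of $\mathcal{J}_{\alpha,y^\delta}$ is non-empty.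
   Context: A function $f$ is $\rho$-convex if $f-\frac{\rho}{2}\|\cdot\|^2$ is convex; $\mu$-strongly convex means $\mu$-convex with $\mu>0$; $\gamma$-weakly convex ($\gamma\ge0$) means $f+\frac{\gamma}{2}\|\cdot\|^2$ is convex. The (Fréchet) subdifferential of $f:\mathcal{X}\to\mathbb{R}\cup\{\infty\}$ at $x$ with $f(x)<\infty$ is $\partial f(x)=\{\psi\in\mathcal{X}^*: f(x')\ge f(x)+\psi(x'-x)+o(\|x'-x\|)\text{ as }x'\to x\}$ (empty if $f(x)=\infty$); a critical point is a point $x$ with $0\in\partial f(x)$. *)

theory Defs
  imports "HOL-Analysis.Analysis"
begin

definition weakly_convergent_to :: "(nat \<Rightarrow> 'a::real_normed_vector) \<Rightarrow> 'a \<Rightarrow> bool" where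
  "weakly_convergent_to xs x \<longleftrightarrow>
     (\<forall>f :: 'a \<Rightarrow>\<^sub>L real. (\<lambda>n. blinfun_apply f (xs n)) \<longlonglongrightarrow> blinfun_apply f x)"

definition weakly_seq_lsc :: "('a::real_normed_vector \<Rightarrow> real) \<Rightarrow> bool" where
  "weakly_seq_lsc f \<longleftrightarrow>
     (\<forall>xs x. weakly_convergent_to xs x \<longrightarrow>
        ereal (f x) \<le> liminf (\<lambda>n. ereal (f (xs n))))"

definition reflexive_space :: "'a::real_normed_vector itself \<Rightarrow> bool" where
  "reflexive_space _ \<longleftrightarrow>
     (\<forall>\<Phi> :: ('a \<Rightarrow>\<^sub>L real) \<Rightarrow>\<^sub>L real. \<exists>x::'a.
        \<forall>f. blinfun_apply \<Phi> f = blinfun_apply f x)"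

definition rho_convex :: "real \<Rightarrow> ('a::real_normed_vector \<Rightarrow> real) \<Rightarrow> bool" where
  "rho_convex \<rho> f \<longleftrightarrow> convex_on UNIV (\<lambda>x. f x - \<rho> / 2 * (norm x)\<^sup>2)"

definition strongly_convex :: "real \<Rightarrow> ('a::real_normed_vector \<Rightarrow> real) \<Rightarrow> bool" where
  "strongly_convex \<mu> f \<longleftrightarrow> \<mu> > 0 \<and> rho_convex \<mu> f"

definition weakly_convex :: "real \<Rightarrow> ('a::real_normed_vector \<Rightarrow> real) \<Rightarrow> bool" where
  "weakly_convex \<gamma> f \<longleftrightarrow> \<gamma> \<ge> 0 \<and> convex_on UNIV (\<lambda>x. f x + \<gamma> / 2 * (norm x)\<^sup>2)"

definition frechet_subdiff :: "('a::real_normed_vector \<Rightarrow> real) \<Rightarrow> 'a \<Rightarrow> ('a \<Rightarrow>\<^sub>L real) set" where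
  "frechet_subdiff f x = {\<psi>. \<forall>\<epsilon>>0. \<forall>\<^sub>F x' in at x.
       f x' \<ge> f x + blinfun_apply \<psi> (x' - x) - \<epsilon> * norm (x' - x)}"

definition critical_point :: "('a::real_normed_vector \<Rightarrow> real) \<Rightarrow> 'a \<Rightarrow> bool" where
  "critical_point f x \<longleftrightarrow> 0 \<in> frechet_subdiff f x"

end

(* Since Rwc is nonnegative, R dominates the strongly convex part Rsc, and
   Rsc - mu/2 |x|^2 is convex.  R is weakly, hence strongly, lower semicontinuous, so by
   Baire's theorem it is bounded above on some ball; a convex function bounded above on a
   ball has a minorant -C0 - C1 |x|, so J grows quadratically.  A minimizing sequence of J
   is therefore bounded, reflexivity yields a weakly convergent subsequence, and weak lower
   semicontinuity makes its weak limit a global minimizer, in particular a critical point.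

   Weak sequential compactness of bounded sequences in reflexive spaces is derived from
   the Hahn-Banach theorem: a diagonal argument gives a subsequence converging against the
   norming functionals of a countable dense subset of the span of the sequence.  By
   Hahn-Banach and reflexivity these functionals are dense in the dual for the seminorm
   h |-> sup_n |h(x_n)|, so the subsequence converges against every functional, and
   reflexivity provides the weak limit. *)

theory Submission
  imports Defs "HOL-Library.Diagonal_Subsequence"
begin

section \<open>The Hahn-Banach theorem for sublinear functionals\<close>

definition sublinear :: "('a::real_vector \<Rightarrow> real) \<Rightarrow> bool" where
  "sublinear p \<longleftrightarrow>
     (\<forall>x y. p (x + y) \<le> p x + p y) \<and> (\<forall>c x. 0 \<le> c \<longrightarrow> p (c *\<^sub>R x) = c * p x)"

lemma sublinearD:
  assumes "sublinear p"
  shows sublinear_add: "p (x + y) \<le> p x + p y"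
    and sublinear_scaleR: "0 \<le> c \<Longrightarrow> p (c *\<^sub>R x) = c * p x"
  using assms unfolding sublinear_def by blast+

lemma sublinear_norm: "sublinear norm"
  unfolding sublinear_def by (simp add: norm_triangle_ineq)

text \<open>A partial linear functional dominated by \<open>p\<close>, represented by its graph so that
  Zorn's lemma can be applied to the inclusion order.\<close>
definition dominated_graph :: "('a::real_vector \<Rightarrow> real) \<Rightarrow> ('a \<times> real) set \<Rightarrow> bool" where
  "dominated_graph p G \<longleftrightarrow> (0, 0) \<in> G \<and>
     (\<forall>x a b. (x, a) \<in> G \<longrightarrow> (x, b) \<in> G \<longrightarrow> a = b) \<and>
     (\<forall>x a y b. (x, a) \<in> G \<longrightarrow> (y, b) \<in> G \<longrightarrow> (x + y, a + b) \<in> G) \<and>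
     (\<forall>x a c. (x, a) \<in> G \<longrightarrow> (c *\<^sub>R x, c * a) \<in> G) \<and>
     (\<forall>x a. (x, a) \<in> G \<longrightarrow> a \<le> p x)"

lemma dominated_graphD:
  assumes "dominated_graph p G"
  shows dominated_graph_zero: "(0, 0) \<in> G"
    and dominated_graph_unique: "(x, a) \<in> G \<Longrightarrow> (x, b) \<in> G \<Longrightarrow> a = b"
    and dominated_graph_add: "(x, a) \<in> G \<Longrightarrow> (y, b) \<in> G \<Longrightarrow> (x + y, a + b) \<in> G"
    and dominated_graph_scaleR: "(x, a) \<in> G \<Longrightarrow> (c *\<^sub>R x, c * a) \<in> G"
    and dominated_graph_le: "(x, a) \<in> G \<Longrightarrow> a \<le> p x"
  using assms unfolding dominated_graph_def by blast+

lemma dominated_graph_extend_by_le: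
  assumes p: "sublinear p" and G: "dominated_graph p G"
    and lower: "\<And>y b. (y, b) \<in> G \<Longrightarrow> b - p (y - z) \<le> c"
    and upper: "\<And>x a. (x, a) \<in> G \<Longrightarrow> c \<le> p (x + z) - a"
    and xa: "(x, a) \<in> G"
  shows "a + t * c \<le> p (x + t *\<^sub>R z)"
proof -
  consider "t > 0" | "t = 0" | "t < 0" by linarith
  then show ?thesis
  proof cases
    case 1
    have "c \<le> p ((1 / t) *\<^sub>R x + z) - (1 / t) * a"
      using upper[OF dominated_graph_scaleR[OF G xa]] .
    then have "t * c \<le> t * (p ((1 / t) *\<^sub>R x + z) - (1 / t) * a)"
      using 1 by (intro mult_left_mono) auto
    also have "\<dots> = t * p ((1 / t) *\<^sub>R x + z) - a"
      using 1 by (simp add: algebra_simps)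
    also have "t * p ((1 / t) *\<^sub>R x + z) = p (x + t *\<^sub>R z)"
      using sublinear_scaleR[OF p, of t "(1 / t) *\<^sub>R x + z"] 1 by (simp add: algebra_simps)
    finally show ?thesis by simp
  next
    case 2
    then show ?thesis using dominated_graph_le[OF G xa] by simp
  next
    case 3
    have "(-1 / t) * a - p ((-1 / t) *\<^sub>R x - z) \<le> c"
      using lower[OF dominated_graph_scaleR[OF G xa]] .
    then have "(- t) * ((-1 / t) * a - p ((-1 / t) *\<^sub>R x - z)) \<le> (- t) * c"
      using 3 by (intro mult_left_mono) auto
    then have "a + t * c \<le> (- t) * p ((-1 / t) *\<^sub>R x - z)"
      using 3 by (simp add: algebra_simps)
    also have "(- t) * p ((-1 / t) *\<^sub>R x - z) = p (x + t *\<^sub>R z)"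
      using sublinear_scaleR[OF p, of "- t" "(-1 / t) *\<^sub>R x - z"] 3 by (simp add: algebra_simps)
    finally show ?thesis by simp
  qed
qed

lemma dominated_graph_extend_by:
  assumes p: "sublinear p" and G: "dominated_graph p G" and z: "\<forall>a. (z, a) \<notin> G"
    and lower: "\<And>y b. (y, b) \<in> G \<Longrightarrow> b - p (y - z) \<le> c"
    and upper: "\<And>x a. (x, a) \<in> G \<Longrightarrow> c \<le> p (x + z) - a"
  shows "dominated_graph p {(x + t *\<^sub>R z, a + t * c) |x a t. (x, a) \<in> G}"
  (is "dominated_graph p ?G'")
  unfolding dominated_graph_def
proof (intro conjI allI impI)
  show "(0, 0) \<in> ?G'"
    using dominated_graph_zero[OF G] by force
next
  fix w u v assume "(w, u) \<in> ?G'" "(w, v) \<in> ?G'"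
  then obtain x a t x' a' t' where 1: "(x, a) \<in> G" "w = x + t *\<^sub>R z" "u = a + t * c"
    and 2: "(x', a') \<in> G" "w = x' + t' *\<^sub>R z" "v = a' + t' * c" by blast
  have "t = t'"
  proof (rule ccontr)
    assume "t \<noteq> t'"
    have "x' - x = (t - t') *\<^sub>R z" using 1(2) 2(2) by (simp add: algebra_simps)
    then have "(1 / (t - t')) *\<^sub>R (x' + (-1) *\<^sub>R x) = z" using \<open>t \<noteq> t'\<close> by simp
    moreover have "((1 / (t - t')) *\<^sub>R (x' + (-1) *\<^sub>R x), (1 / (t - t')) * (a' + (-1) * a)) \<in> G"
      by (intro dominated_graph_scaleR[OF G] dominated_graph_add[OF G] 1 2)
    ultimately show False using z by metis
  qed
  then show "u = v" using 1 2 dominated_graph_unique[OF G] by auto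
next
  fix w u w' u' assume "(w, u) \<in> ?G'" "(w', u') \<in> ?G'"
  then obtain x a t x' a' t' where 1: "(x, a) \<in> G" "w = x + t *\<^sub>R z" "u = a + t * c"
    and 2: "(x', a') \<in> G" "w' = x' + t' *\<^sub>R z" "u' = a' + t' * c" by blast
  have "(w + w', u + u') = ((x + x') + (t + t') *\<^sub>R z, (a + a') + (t + t') * c)"
    using 1 2 by (simp add: algebra_simps)
  then show "(w + w', u + u') \<in> ?G'"
    using dominated_graph_add[OF G 1(1) 2(1)] by blast
next
  fix w u s assume "(w, u) \<in> ?G'"
  then obtain x a t where 1: "(x, a) \<in> G" "w = x + t *\<^sub>R z" "u = a + t * c" by blast
  have "(s *\<^sub>R w, s * u) = (s *\<^sub>R x + (s * t) *\<^sub>R z, s * a + (s * t) * c)"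
    using 1 by (simp add: algebra_simps)
  then show "(s *\<^sub>R w, s * u) \<in> ?G'"
    using dominated_graph_scaleR[OF G 1(1)] by blast
next
  fix w u assume "(w, u) \<in> ?G'"
  then show "u \<le> p w"
    using dominated_graph_extend_by_le[OF p G lower upper] by blast
qed

lemma dominated_graph_extend:
  assumes p: "sublinear p" and G: "dominated_graph p G" and z: "\<forall>a. (z, a) \<notin> G"
  shows "\<exists>G'. dominated_graph p G' \<and> G \<subset> G'"
proof -
  \<comment> \<open>any value between the two bounds works, e.g. the supremum of the lower ones\<close>
  define c where "c = Sup {b - p (y - z) |y b. (y, b) \<in> G}"
  have gap: "b - p (y - z) \<le> p (x + z) - a" if "(x, a) \<in> G" "(y, b) \<in> G" for x a y b
  proof -
    have "a + b \<le> p ((x + z) + (y - z))"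
      using dominated_graph_le[OF G dominated_graph_add[OF G that]] by (simp add: algebra_simps)
    also have "\<dots> \<le> p (x + z) + p (y - z)" by (rule sublinear_add[OF p])
    finally show ?thesis by simp
  qed
  have lower: "b - p (y - z) \<le> c" if "(y, b) \<in> G" for y b
    unfolding c_def using that gap[OF dominated_graph_zero[OF G]]
    by (intro cSup_upper bdd_aboveI) auto
  have upper: "c \<le> p (x + z) - a" if "(x, a) \<in> G" for x a
    unfolding c_def using dominated_graph_zero[OF G] gap[OF that]
    by (intro cSup_least) auto
  define G' where "G' = {(x + t *\<^sub>R z, a + t * c) |x a t. (x, a) \<in> G}"
  have "dominated_graph p G'"
    unfolding G'_def using dominated_graph_extend_by[OF p G z lower upper] .
  moreover have "G \<subseteq> G'" unfolding G'_def by force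
  moreover have "(z, c) \<in> G'" unfolding G'_def using dominated_graph_zero[OF G] by force
  ultimately show ?thesis using z by blast
qed

lemma dominated_graph_Union_chain:
  assumes C: "C \<in> chains {G. dominated_graph p G \<and> G0 \<subseteq> G}" and "C \<noteq> {}"
  shows "dominated_graph p (\<Union>C) \<and> G0 \<subseteq> \<Union>C"
proof -
  have ok: "dominated_graph p G" "G0 \<subseteq> G" if "G \<in> C" for G
    using C that unfolding chains_def by blast+
  have common: "\<exists>K\<in>C. u \<in> K \<and> v \<in> K" if "u \<in> \<Union>C" "v \<in> \<Union>C" for u v
    using that C unfolding chains_def chain_subset_def by blast
  from \<open>C \<noteq> {}\<close> obtain G1 where "G1 \<in> C" by blast
  show ?thesis
    unfolding dominated_graph_def
  proof (intro conjI allI impI)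
    show "(0, 0) \<in> \<Union>C" "G0 \<subseteq> \<Union>C"
      using ok[OF \<open>G1 \<in> C\<close>] dominated_graph_zero \<open>G1 \<in> C\<close> by blast+
  next
    fix x a b assume "(x, a) \<in> \<Union>C" "(x, b) \<in> \<Union>C"
    with common obtain K where "K \<in> C" "(x, a) \<in> K" "(x, b) \<in> K" by blast
    then show "a = b" using dominated_graph_unique ok by blast
  next
    fix x a y b assume "(x, a) \<in> \<Union>C" "(y, b) \<in> \<Union>C"
    with common obtain K where "K \<in> C" "(x, a) \<in> K" "(y, b) \<in> K" by blast
    then show "(x + y, a + b) \<in> \<Union>C" using dominated_graph_add ok by blast
  next
    fix x a c assume "(x, a) \<in> \<Union>C"
    then obtain K where "K \<in> C" "(x, a) \<in> K" by blast
    then show "(c *\<^sub>R x, c * a) \<in> \<Union>C" using dominated_graph_scaleR ok by blast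
  next
    fix x a assume "(x, a) \<in> \<Union>C"
    then obtain K where "K \<in> C" "(x, a) \<in> K" by blast
    then show "a \<le> p x" using dominated_graph_le ok by blast
  qed
qed

lemma dominated_graph_total_extension:
  assumes p: "sublinear p" and G0: "dominated_graph p G0"
  shows "\<exists>F. linear F \<and> (\<forall>x. F x \<le> p x) \<and> (\<forall>x a. (x, a) \<in> G0 \<longrightarrow> F x = a)"
proof -
  define \<G> where "\<G> = {G. dominated_graph p G \<and> G0 \<subseteq> G}"
  have "\<forall>C\<in>chains \<G>. \<exists>U\<in>\<G>. \<forall>X\<in>C. X \<subseteq> U"
  proof
    fix C assume C: "C \<in> chains \<G>"
    show "\<exists>U\<in>\<G>. \<forall>X\<in>C. X \<subseteq> U"
    proof (cases "C = {}")
      case True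
      then show ?thesis using G0 unfolding \<G>_def by blast
    next
      case False
      then show ?thesis using dominated_graph_Union_chain C unfolding \<G>_def by blast
    qed
  qed
  from Zorn_Lemma2[OF this] obtain G where "G \<in> \<G>" and max: "\<And>X. X \<in> \<G> \<Longrightarrow> G \<subseteq> X \<Longrightarrow> X = G"
    by blast
  then have G: "dominated_graph p G" and "G0 \<subseteq> G" unfolding \<G>_def by auto
  have total: "\<exists>a. (x, a) \<in> G" for x
  proof (rule ccontr)
    assume "\<nexists>a. (x, a) \<in> G"
    with dominated_graph_extend[OF p G] obtain G' where "dominated_graph p G'" "G \<subset> G'"
      by blast
    then show False using max[of G'] \<open>G0 \<subseteq> G\<close> unfolding \<G>_def by blast
  qed
  define F where "F x = (THE a. (x, a) \<in> G)" for x
  have graph: "(x, a) \<in> G \<longleftrightarrow> F x = a" for x a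
    unfolding F_def using total[of x] dominated_graph_unique[OF G] by (metis theI)
  have "linear F"
    by (rule linearI) (use graph dominated_graph_add[OF G] dominated_graph_scaleR[OF G] in auto)
  moreover have "\<forall>x. F x \<le> p x" using graph dominated_graph_le[OF G] by blast
  ultimately show ?thesis using graph \<open>G0 \<subseteq> G\<close> by blast
qed

lemma dominated_graph_zero_on_subspace:
  assumes "subspace T" and "\<And>y. y \<in> T \<Longrightarrow> 0 \<le> p y"
  shows "dominated_graph p {(y, 0) |y. y \<in> T}"
  using assms unfolding dominated_graph_def
  by (auto simp: subspace_0 subspace_add subspace_scale)

theorem hahn_banach_sublinear:
  assumes p: "sublinear p" and T: "subspace T"
    and dominated: "\<And>y t. y \<in> T \<Longrightarrow> t * d \<le> p (y + t *\<^sub>R z)"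
  shows "\<exists>F. linear F \<and> (\<forall>x. F x \<le> p x) \<and> (\<forall>y\<in>T. F y = 0) \<and> F z = d"
proof -
  define GT where "GT = {(y, 0 :: real) |y. y \<in> T}"
  have GT: "dominated_graph p GT"
    unfolding GT_def using dominated_graph_zero_on_subspace[OF T] dominated[of _ 0] by simp
  show ?thesis
  proof (cases "z \<in> T")
    case True
    have "d = 0"
      using dominated[of "- z" 1] dominated[of z "-1"] True subspace_neg[OF T]
        sublinear_scaleR[OF p, of 0 0] by simp
    with dominated_graph_total_extension[OF p GT] True show ?thesis
      unfolding GT_def by blast
  next
    case False
    define G' where "G' = {(x + t *\<^sub>R z, a + t * d) |x a t. (x, a) \<in> GT}"
    have "\<forall>a. (z, a) \<notin> GT" using False unfolding GT_def by blast
    moreover have "b - p (y - z) \<le> d" if "(y, b) \<in> GT" for y b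
      using that dominated[of y "-1"] unfolding GT_def by auto
    moreover have "d \<le> p (x + z) - a" if "(x, a) \<in> GT" for x a
      using that dominated[of x 1] unfolding GT_def by auto
    ultimately have "dominated_graph p G'"
      unfolding G'_def by (rule dominated_graph_extend_by[OF p GT])
    moreover have "(y, 0) \<in> G'" if "y \<in> T" for y
      unfolding G'_def GT_def using that by force
    moreover have "(z, d) \<in> G'"
      unfolding G'_def GT_def using subspace_0[OF T] by force
    ultimately show ?thesis
      using dominated_graph_total_extension[OF p] by metis
  qed
qed

corollary hahn_banach_sublinear_distance:
  assumes p: "sublinear p" and p_nonneg: "\<And>x. 0 \<le> p x" and T: "subspace T"
    and far: "\<And>y. y \<in> T \<Longrightarrow> d \<le> p (z - y)" and "0 \<le> d"
  shows "\<exists>F. linear F \<and> (\<forall>x. F x \<le> p x) \<and> (\<forall>y\<in>T. F y = 0) \<and> F z = d"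
proof (rule hahn_banach_sublinear[OF p T])
  fix y t assume "y \<in> T"
  show "t * d \<le> p (y + t *\<^sub>R z)"
  proof (cases "t > 0")
    case True
    have eq: "t *\<^sub>R (z - (- (1 / t)) *\<^sub>R y) = y + t *\<^sub>R z"
      using True by (simp add: algebra_simps)
    have "t * d \<le> t * p (z - (- (1 / t)) *\<^sub>R y)"
      using far[OF subspace_scale[OF T \<open>y \<in> T\<close>, of "- (1 / t)"]] True by simp
    also have "\<dots> = p (y + t *\<^sub>R z)"
      unfolding eq[symmetric] using sublinear_scaleR[OF p] True by simp
    finally show ?thesis .
  next
    case False
    then have "t * d \<le> 0" using \<open>0 \<le> d\<close> by (simp add: mult_nonpos_nonneg)
    then show ?thesis using p_nonneg order_trans by blast
  qed
qed

lemma linear_bounded_above_imp_bounded_linear: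
  fixes F :: "'a::real_normed_vector \<Rightarrow> real"
  assumes "linear F" and "\<And>x. F x \<le> K * norm x"
  shows "bounded_linear F"
proof (rule bounded_linear_intro)
  show "F (x + y) = F x + F y" for x y using linear_add[OF assms(1)] .
  show "F (r *\<^sub>R x) = r *\<^sub>R F x" for r x using linear_scale[OF assms(1)] by simp
  show "norm (F x) \<le> norm x * K" for x
    using assms(2)[of x] assms(2)[of "- x"] linear_neg[OF assms(1), of x] by (simp add: mult.commute)
qed

corollary hahn_banach_normed:
  fixes z :: "'a::real_normed_vector"
  assumes "subspace T" and "\<And>y. y \<in> T \<Longrightarrow> d \<le> norm (z - y)" and "0 \<le> d"
  shows "\<exists>f :: 'a \<Rightarrow>\<^sub>L real. (\<forall>y\<in>T. f y = 0) \<and> f z = d \<and> (\<forall>v. \<bar>f v\<bar> \<le> norm v)"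
proof -
  obtain F where F: "linear F" "\<forall>x. F x \<le> norm x" "\<forall>y\<in>T. F y = 0" "F z = d"
    using hahn_banach_sublinear_distance[OF sublinear_norm norm_ge_zero assms] by blast
  have "bounded_linear F"
    using linear_bounded_above_imp_bounded_linear[of F 1] F by simp
  moreover have "\<bar>F v\<bar> \<le> norm v" for v
    using F(2) linear_neg[OF F(1), of v] by (metis abs_le_iff norm_minus_cancel)
  ultimately show ?thesis
    using F by (intro exI[of _ "Blinfun F"]) (auto simp: bounded_linear_Blinfun_apply)
qed

corollary norming_functional:
  fixes m :: "'a::real_normed_vector"
  shows "\<exists>f :: 'a \<Rightarrow>\<^sub>L real. f m = norm m \<and> (\<forall>v. \<bar>f v\<bar> \<le> norm v)"
  using hahn_banach_normed[OF subspace_single_0, of "norm m" m] by auto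

section \<open>Weak sequential compactness in reflexive spaces\<close>

definition seq_seminorm :: "(nat \<Rightarrow> 'a::real_normed_vector) \<Rightarrow> ('a \<Rightarrow>\<^sub>L real) \<Rightarrow> real" where
  "seq_seminorm xs h = (SUP n. \<bar>h (xs n)\<bar>)"

lemma abs_blinfun_le_norm_bound:
  assumes "norm v \<le> B"
  shows "\<bar>blinfun_apply h v\<bar> \<le> norm h * B"
  using norm_blinfun[of h v] mult_left_mono[OF assms norm_ge_zero[of h]] by simp

lemma seq_seminorm_upper:
  assumes "\<forall>n. norm (xs n) \<le> B"
  shows "\<bar>blinfun_apply h (xs n)\<bar> \<le> seq_seminorm xs h"
  unfolding seq_seminorm_def
  using abs_blinfun_le_norm_bound assms by (intro cSUP_upper bdd_aboveI2) auto

lemma seq_seminorm_le_norm: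
  assumes "\<forall>n. norm (xs n) \<le> B"
  shows "seq_seminorm xs h \<le> norm h * B"
  unfolding seq_seminorm_def
  using abs_blinfun_le_norm_bound assms by (intro cSUP_least) auto

lemma seq_seminorm_least:
  assumes "\<And>n. \<bar>blinfun_apply h (xs n)\<bar> \<le> c"
  shows "seq_seminorm xs h \<le> c"
  unfolding seq_seminorm_def using assms by (intro cSUP_least) auto

lemma seq_seminorm_nonneg:
  assumes "\<forall>n. norm (xs n) \<le> B"
  shows "0 \<le> seq_seminorm xs h"
  using order_trans[OF abs_ge_zero seq_seminorm_upper[OF assms]] by blast

lemma seq_seminorm_uminus: "seq_seminorm xs (- h) = seq_seminorm xs h"
  unfolding seq_seminorm_def by (simp add: uminus_blinfun.rep_eq)

lemma sublinear_seq_seminorm: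
  assumes B: "\<forall>n. norm (xs n) \<le> B"
  shows "sublinear (seq_seminorm xs)"
  unfolding sublinear_def
proof (intro conjI allI impI)
  fix h1 h2 :: "'a \<Rightarrow>\<^sub>L real"
  show "seq_seminorm xs (h1 + h2) \<le> seq_seminorm xs h1 + seq_seminorm xs h2"
    using seq_seminorm_upper[OF B, of h1] seq_seminorm_upper[OF B, of h2]
    by (intro seq_seminorm_least) (smt (verit) blinfun.add_left)
next
  fix c :: real and h :: "'a \<Rightarrow>\<^sub>L real" assume "0 \<le> c"
  show "seq_seminorm xs (c *\<^sub>R h) = c * seq_seminorm xs h"
  proof (cases "c = 0")
    case True
    then show ?thesis unfolding seq_seminorm_def by simp
  next
    case False
    with \<open>0 \<le> c\<close> have "0 < c" by simp
    have "seq_seminorm xs (c *\<^sub>R h) \<le> c * seq_seminorm xs h"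
      using seq_seminorm_upper[OF B, of h] \<open>0 < c\<close>
      by (intro seq_seminorm_least) (simp add: abs_mult scaleR_blinfun.rep_eq)
    moreover have "seq_seminorm xs h \<le> seq_seminorm xs (c *\<^sub>R h) / c"
      using seq_seminorm_upper[OF B, of "c *\<^sub>R h"] \<open>0 < c\<close>
      by (intro seq_seminorm_least) (simp add: abs_mult scaleR_blinfun.rep_eq field_simps)
    ultimately show ?thesis using \<open>0 < c\<close> by (simp add: field_simps)
  qed
qed

definition rat_span :: "(nat \<Rightarrow> 'a::real_vector) \<Rightarrow> 'a set" where
  "rat_span xs = {\<Sum>i<N. of_rat (w i) *\<^sub>R xs i |N w. True}"

lemma rat_spanI: "v = (\<Sum>i<N. of_rat (w i) *\<^sub>R xs i) \<Longrightarrow> v \<in> rat_span xs"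
  unfolding rat_span_def by blast

lemma countable_rat_span: "countable (rat_span xs)"
proof -
  define comb where "comb qs = (\<Sum>i<length qs. of_rat (qs ! i) *\<^sub>R xs i)" for qs :: "rat list"
  have "rat_span xs \<subseteq> range comb"
  proof
    fix v assume "v \<in> rat_span xs"
    then obtain N w where v: "v = (\<Sum>i<N. of_rat (w i) *\<^sub>R xs i)" unfolding rat_span_def by blast
    have "comb (map w [0..<N]) = v" unfolding comb_def v by (intro sum.cong) auto
    then show "v \<in> range comb" by blast
  qed
  then show ?thesis by (rule countable_subset) simp
qed

lemma rat_span_add:
  assumes "a \<in> rat_span xs" and "b \<in> rat_span xs"
  shows "a + b \<in> rat_span xs"
proof -
  obtain N1 w1 where a: "a = (\<Sum>i<N1. of_rat (w1 i) *\<^sub>R xs i)"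
    using assms(1) unfolding rat_span_def by blast
  obtain N2 w2 where b: "b = (\<Sum>i<N2. of_rat (w2 i) *\<^sub>R xs i)"
    using assms(2) unfolding rat_span_def by blast
  define w where "w i = (if i < N1 then w1 i else 0) + (if i < N2 then w2 i else 0)" for i
  have pad: "(\<Sum>i<N1 + N2. if i < N then f i else 0) = (\<Sum>i<N. f i)"
    if "N \<le> N1 + N2" for N and f :: "nat \<Rightarrow> 'a"
    using sum.inter_restrict[of "{..<N1 + N2}" f "{..<N}"] that by (simp add: Int_absorb1)
  have "of_rat (w i) *\<^sub>R xs i = (if i < N1 then of_rat (w1 i) *\<^sub>R xs i else 0) +
      (if i < N2 then of_rat (w2 i) *\<^sub>R xs i else 0)" for i
    unfolding w_def by (simp add: of_rat_add scaleR_add_left)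
  then have "(\<Sum>i<N1 + N2. of_rat (w i) *\<^sub>R xs i) = a + b"
    unfolding a b by (simp add: sum.distrib pad)
  then show ?thesis by (intro rat_spanI) (rule sym)
qed

lemma rat_span_scaleR:
  assumes "a \<in> rat_span xs"
  shows "of_rat r *\<^sub>R a \<in> rat_span xs"
proof -
  obtain N w where "a = (\<Sum>i<N. of_rat (w i) *\<^sub>R xs i)"
    using assms unfolding rat_span_def by blast
  then have "of_rat r *\<^sub>R a = (\<Sum>i<N. of_rat (r * w i) *\<^sub>R xs i)"
    by (simp add: scaleR_sum_right of_rat_mult)
  then show ?thesis by (rule rat_spanI)
qed

lemma rat_span_base: "xs j \<in> rat_span xs"
proof (rule rat_spanI)
  show "xs j = (\<Sum>i<Suc j. of_rat (if i = j then 1 else 0) *\<^sub>R xs i)"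
    by (simp add: if_distrib cong: if_cong)
qed

lemma span_subset_closure_rat_span:
  fixes xs :: "nat \<Rightarrow> 'a::real_normed_vector"
  shows "span (range xs) \<subseteq> closure (rat_span xs)"
proof (rule span_minimal)
  show "range xs \<subseteq> closure (rat_span xs)"
    using rat_span_base closure_subset by blast
  let ?P = "closure (rat_span xs)"
  have rat_scale: "of_rat r *\<^sub>R x \<in> ?P" if "x \<in> ?P" for r x
  proof -
    have "(*\<^sub>R) (of_rat r) ` rat_span xs \<subseteq> rat_span xs"
      using rat_span_scaleR by blast
    then have "(*\<^sub>R) (of_rat r) ` ?P \<subseteq> ?P"
      unfolding closure_scaleR by (rule closure_mono)
    then show ?thesis using that by blast
  qed
  show "subspace ?P"
    unfolding subspace_def
  proof (intro conjI ballI allI)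
    show "0 \<in> ?P"
      using rat_scale[of "xs 0" 0] rat_span_base closure_subset by fastforce
  next
    fix x y assume "x \<in> ?P" "y \<in> ?P"
    then have "x + y \<in> closure (rat_span xs + rat_span xs)"
      using closure_sum by (blast intro: set_plus_intro)
    moreover have "rat_span xs + rat_span xs \<subseteq> rat_span xs"
      by (auto simp: set_plus_def intro: rat_span_add)
    ultimately show "x + y \<in> ?P" using closure_mono by blast
  next
    fix c :: real and x assume "x \<in> ?P"
    have "(\<lambda>c. c *\<^sub>R x) ` closure \<rat> \<subseteq> ?P"
      using rat_scale[OF \<open>x \<in> ?P\<close>]
      by (intro image_closure_subset continuous_intros) (auto elim: Rats_cases)
    then show "c *\<^sub>R x \<in> ?P" by (auto simp: Rats_closure_real)
  qed
qed

lemma countable_family_convergent_subseq: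
  fixes s :: "'i \<Rightarrow> nat \<Rightarrow> real"
  assumes "countable I" and bounded: "\<And>i. i \<in> I \<Longrightarrow> bounded (range (s i))"
  shows "\<exists>r. strict_mono r \<and> (\<forall>i\<in>I. convergent (s i \<circ> r))"
proof (cases "I = {}")
  case True
  then show ?thesis using strict_mono_id by blast
next
  case False
  define e where "e = from_nat_into I"
  have range_e: "range e = I" unfolding e_def using False \<open>countable I\<close> by simp
  interpret subseqs "\<lambda>j r. convergent (s (e j) \<circ> r)"
  proof
    fix j and r :: "nat \<Rightarrow> nat" assume "strict_mono r"
    have "bounded (range (s (e j) \<circ> r))"
      using bounded[of "e j"] range_e by (auto intro: bounded_subset)
    then show "\<exists>r'. strict_mono r' \<and> convergent (s (e j) \<circ> (r \<circ> r'))"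
      using bounded_imp_convergent_subsequence by (metis comp_assoc convergent_def)
  qed
  have "convergent (s (e j) \<circ> diagseq)" for j
  proof -
    have "convergent (s (e j) \<circ> (diagseq \<circ> (+) (Suc j)))"
      by (rule diagseq_holds) (metis comp_assoc convergent_subseq_convergent)
    then have "convergent (\<lambda>k. (s (e j) \<circ> diagseq) (k + Suc j))"
      by (simp add: o_def add.commute)
    then show ?thesis by (simp only: convergent_ignore_initial_segment)
  qed
  then show ?thesis using subseq_diagseq range_e by auto
qed

lemma reflexive_space_evaluation:
  fixes \<Psi> :: "('a::real_normed_vector \<Rightarrow>\<^sub>L real) \<Rightarrow> real"
  assumes "reflexive_space TYPE('a)" and "bounded_linear \<Psi>"
  obtains x :: 'a where "\<And>f. \<Psi> f = blinfun_apply f x"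
  using assms unfolding reflexive_space_def by (metis bounded_linear_Blinfun_apply)

lemma reflexive_pointwise_limit_is_weak_limit:
  fixes xs :: "nat \<Rightarrow> 'a::real_normed_vector"
  assumes refl: "reflexive_space TYPE('a)" and B: "\<forall>n. norm (xs n) \<le> B"
    and conv: "\<And>f :: 'a \<Rightarrow>\<^sub>L real. convergent (\<lambda>n. f (xs n))"
  shows "\<exists>x. weakly_convergent_to xs x"
proof -
  define \<Phi> where "\<Phi> f = lim (\<lambda>n. f (xs n))" for f :: "'a \<Rightarrow>\<^sub>L real"
  have \<Phi>: "(\<lambda>n. blinfun_apply f (xs n)) \<longlonglongrightarrow> \<Phi> f" for f
    using conv unfolding \<Phi>_def by (simp add: convergent_LIMSEQ_iff)
  have "bounded_linear \<Phi>"
  proof (rule bounded_linear_intro[where K = B])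
    fix f g :: "'a \<Rightarrow>\<^sub>L real"
    show "\<Phi> (f + g) = \<Phi> f + \<Phi> g"
      using \<Phi>[of "f + g"] tendsto_add[OF \<Phi>[of f] \<Phi>[of g]]
      by (simp add: plus_blinfun.rep_eq LIMSEQ_unique)
  next
    fix c :: real and f :: "'a \<Rightarrow>\<^sub>L real"
    show "\<Phi> (c *\<^sub>R f) = c *\<^sub>R \<Phi> f"
      using \<Phi>[of "c *\<^sub>R f"] tendsto_mult_left[OF \<Phi>[of f], of c]
      by (simp add: scaleR_blinfun.rep_eq LIMSEQ_unique)
  next
    fix f :: "'a \<Rightarrow>\<^sub>L real"
    show "norm (\<Phi> f) \<le> norm f * B"
    proof -
      have "\<forall>n. \<bar>f (xs n)\<bar> \<le> norm f * B"
        using abs_blinfun_le_norm_bound B by blast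
      then show ?thesis
        using tendsto_upperbound[OF tendsto_rabs[OF \<Phi>[of f]] always_eventually]
        by (simp add: trivial_limit_sequentially)
    qed
  qed
  then obtain x where "\<And>f. \<Phi> f = blinfun_apply f x"
    using reflexive_space_evaluation[OF refl] by blast
  then show ?thesis using \<Phi> unfolding weakly_convergent_to_def by auto
qed

lemma seq_seminorm_dominated_imp_closure_span:
  fixes x :: "'a::real_normed_vector"
  assumes dominated: "\<And>h. \<bar>blinfun_apply h x\<bar> \<le> seq_seminorm xs h"
  shows "x \<in> closure (span (range xs))"
proof (rule ccontr)
  assume "x \<notin> closure (span (range xs))"
  then obtain d where "0 < d" and far: "\<And>y. y \<in> span (range xs) \<Longrightarrow> d \<le> norm (x - y)"
    unfolding closure_approachable by (force simp: dist_norm norm_minus_commute)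
  then obtain g :: "'a \<Rightarrow>\<^sub>L real" where g: "\<forall>y\<in>span (range xs). g y = 0" "g x = d"
    using hahn_banach_normed[OF subspace_span far] by auto
  have "seq_seminorm xs g \<le> 0"
    using g(1) by (intro seq_seminorm_least) (simp add: span_base)
  then show False using dominated[of g] g(2) \<open>0 < d\<close> by simp
qed

lemma norming_functionals_vanish_imp_zero:
  fixes x :: "'a::real_normed_vector" and fm :: "'a \<Rightarrow> 'a \<Rightarrow>\<^sub>L real"
  assumes norming: "\<And>m v. \<bar>fm m v\<bar> \<le> norm v" "\<And>m. fm m m = norm m"
    and "x \<in> closure S" and vanish: "\<And>m. m \<in> S \<Longrightarrow> fm m x = 0"
  shows "x = 0"
proof (rule ccontr)
  assume "x \<noteq> 0"
  then obtain m where "m \<in> S" and close: "norm (x - m) < norm x / 2"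
    using \<open>x \<in> closure S\<close> unfolding closure_approachable
    by (metis dist_norm norm_minus_commute half_gt_zero zero_less_norm_iff)
  have "norm m = fm m (m - x)"
    using norming(2) vanish[OF \<open>m \<in> S\<close>] by (simp add: blinfun.diff_right)
  also have "\<dots> \<le> norm (x - m)"
    using norming(1)[of m "m - x"] by (simp add: norm_minus_commute)
  finally have "norm x < norm x / 2 + norm x / 2"
    using close norm_triangle_sub[of x m] by linarith
  then show False by simp
qed

lemma norming_functionals_seminorm_dense:
  fixes xs :: "nat \<Rightarrow> 'a::real_normed_vector" and fm :: "'a \<Rightarrow> 'a \<Rightarrow>\<^sub>L real"
  assumes refl: "reflexive_space TYPE('a)" and B: "\<forall>n. norm (xs n) \<le> B"
    and norming: "\<And>m v. \<bar>fm m v\<bar> \<le> norm v" "\<And>m. fm m m = norm m"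
    and "0 < \<epsilon>"
  shows "\<exists>h\<in>span (fm ` rat_span xs). seq_seminorm xs (f - h) < \<epsilon>"
proof (rule ccontr)
  assume "\<not> ?thesis"
  then have far: "\<And>h. h \<in> span (fm ` rat_span xs) \<Longrightarrow> \<epsilon> \<le> seq_seminorm xs (f - h)"
    by (simp add: not_less)
  obtain \<Psi> where \<Psi>: "linear \<Psi>" "\<forall>h. \<Psi> h \<le> seq_seminorm xs h"
    "\<forall>h\<in>span (fm ` rat_span xs). \<Psi> h = 0" "\<Psi> f = \<epsilon>"
    using hahn_banach_sublinear_distance[OF sublinear_seq_seminorm[OF B]
        seq_seminorm_nonneg[OF B] subspace_span far] \<open>0 < \<epsilon>\<close> by auto
  have "bounded_linear \<Psi>"
    using \<Psi>(1) by (rule linear_bounded_above_imp_bounded_linear[where K = B])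
      (metis \<Psi>(2) seq_seminorm_le_norm[OF B] mult.commute order_trans)
  then obtain x where x: "\<And>h. \<Psi> h = blinfun_apply h x"
    using reflexive_space_evaluation[OF refl] by blast
  \<comment> \<open>\<open>x\<close> lies in the weak closure of the sequence, hence in its closed span\<close>
  have "\<bar>blinfun_apply h x\<bar> \<le> seq_seminorm xs h" for h
    using \<Psi>(2)[rule_format, of h] \<Psi>(2)[rule_format, of "- h"] x[of h] x[of "- h"]
      seq_seminorm_uminus[of xs h]
    by (simp add: uminus_blinfun.rep_eq abs_le_iff)
  then have "x \<in> closure (rat_span xs)"
    using seq_seminorm_dominated_imp_closure_span closure_mono[OF span_subset_closure_rat_span]
    by (metis closure_closure subsetD)
  moreover have "fm m x = 0" if "m \<in> rat_span xs" for m
    using \<Psi>(3) x that by (metis image_eqI span_base)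
  ultimately have "x = 0" by (rule norming_functionals_vanish_imp_zero[OF norming])
  then show False using \<Psi>(4) x[of f] \<open>0 < \<epsilon>\<close> by simp
qed

lemma seq_seminorm_approx_imp_convergent:
  assumes B: "\<forall>n. norm (xs n) \<le> B"
    and approx: "\<And>\<epsilon>. 0 < \<epsilon> \<Longrightarrow>
      \<exists>h. seq_seminorm xs (f - h) < \<epsilon> \<and> convergent (\<lambda>k. blinfun_apply h (xs (r k)))"
  shows "convergent (\<lambda>k. blinfun_apply f (xs (r k)))"
  unfolding Cauchy_convergent_iff[symmetric]
proof (rule CauchyI)
  fix \<epsilon> :: real assume "0 < \<epsilon>"
  then obtain h where h: "seq_seminorm xs (f - h) < \<epsilon> / 3" "convergent (\<lambda>k. h (xs (r k)))"
    using approx[of "\<epsilon> / 3"] by auto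
  then have "Cauchy (\<lambda>k. h (xs (r k)))" by (simp add: Cauchy_convergent_iff)
  then obtain M
    where M: "\<And>m n. M \<le> m \<Longrightarrow> M \<le> n \<Longrightarrow> norm (h (xs (r m)) - h (xs (r n))) < \<epsilon> / 3"
    using CauchyD[of _ "\<epsilon> / 3"] \<open>0 < \<epsilon>\<close> by (metis divide_pos_pos zero_less_numeral)
  have close: "\<bar>f (xs (r k)) - h (xs (r k))\<bar> < \<epsilon> / 3" for k
    using seq_seminorm_upper[OF B, of "f - h" "r k"] h(1) by (simp add: minus_blinfun.rep_eq)
  show "\<exists>M. \<forall>m\<ge>M. \<forall>n\<ge>M. norm (f (xs (r m)) - f (xs (r n))) < \<epsilon>"
  proof (intro exI allI impI)
    fix m n assume "M \<le> m" "M \<le> n"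
    then show "norm (f (xs (r m)) - f (xs (r n))) < \<epsilon>"
      using M[of m n] close[of m] close[of n] unfolding real_norm_def by arith
  qed
qed

theorem reflexive_bounded_seq_weakly_convergent_subseq:
  fixes xs :: "nat \<Rightarrow> 'a::real_normed_vector"
  assumes refl: "reflexive_space TYPE('a)" and B: "\<forall>n. norm (xs n) \<le> B"
  shows "\<exists>r x. strict_mono r \<and> weakly_convergent_to (xs \<circ> r) x"
proof -
  obtain fm :: "'a \<Rightarrow> 'a \<Rightarrow>\<^sub>L real"
    where fm: "\<And>m v. \<bar>fm m v\<bar> \<le> norm v" "\<And>m. fm m m = norm m"
    using norming_functional by metis
  have "bounded (range (\<lambda>k. h (xs k)))" for h :: "'a \<Rightarrow>\<^sub>L real"
    using abs_blinfun_le_norm_bound B unfolding bounded_iff by (auto intro!: exI[of _ "norm h * B"])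
  then obtain r where r: "strict_mono r" "\<forall>h\<in>fm ` rat_span xs. convergent (\<lambda>k. h (xs (r k)))"
    using countable_family_convergent_subseq[of "fm ` rat_span xs" "\<lambda>h k. h (xs k)"]
      countable_rat_span by (auto simp: o_def)
  have "subspace {h :: 'a \<Rightarrow>\<^sub>L real. convergent (\<lambda>k. h (xs (r k)))}"
    unfolding subspace_def
    by (auto simp: plus_blinfun.rep_eq scaleR_blinfun.rep_eq convergent_const
        intro: convergent_add convergent_mult)
  then have span_conv:
      "span (fm ` rat_span xs) \<subseteq> {h. convergent (\<lambda>k. blinfun_apply h (xs (r k)))}"
    using r(2) by (intro span_minimal) auto
  have "convergent (\<lambda>k. blinfun_apply f (xs (r k)))" for f :: "'a \<Rightarrow>\<^sub>L real"
  proof (rule seq_seminorm_approx_imp_convergent[OF B])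
    fix \<epsilon> :: real assume "0 < \<epsilon>"
    then obtain h where "h \<in> span (fm ` rat_span xs)" "seq_seminorm xs (f - h) < \<epsilon>"
      using norming_functionals_seminorm_dense[OF refl B fm] by blast
    then show "\<exists>h. seq_seminorm xs (f - h) < \<epsilon> \<and> convergent (\<lambda>k. h (xs (r k)))"
      using span_conv by blast
  qed
  then obtain x where "weakly_convergent_to (xs \<circ> r) x"
    using reflexive_pointwise_limit_is_weak_limit[OF refl, of "xs \<circ> r" B] B by auto
  with r(1) show ?thesis by blast
qed

section \<open>Weak lower semicontinuity\<close>

lemma LIMSEQ_imp_weakly_convergent_to:
  "xs \<longlonglongrightarrow> x \<Longrightarrow> weakly_convergent_to xs x"
  unfolding weakly_convergent_to_def
  using bounded_linear.tendsto[OF blinfun.bounded_linear_right] by blast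

lemma weakly_convergent_to_bounded_linear_image:
  assumes L: "bounded_linear L" and "weakly_convergent_to xs x"
  shows "weakly_convergent_to (\<lambda>n. L (xs n)) (L x)"
  unfolding weakly_convergent_to_def
proof
  fix f :: "'b \<Rightarrow>\<^sub>L real"
  have "bounded_linear (\<lambda>v. f (L v))"
    using bounded_linear_compose[OF blinfun.bounded_linear_right L] .
  moreover have "(\<lambda>n. Blinfun (\<lambda>v. f (L v)) (xs n)) \<longlonglongrightarrow> Blinfun (\<lambda>v. f (L v)) x"
    using \<open>weakly_convergent_to xs x\<close> unfolding weakly_convergent_to_def by blast
  ultimately show "(\<lambda>n. f (L (xs n))) \<longlonglongrightarrow> f (L x)"
    by (simp add: bounded_linear_Blinfun_apply)
qed

lemma weakly_convergent_to_add_const: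
  assumes "weakly_convergent_to xs x"
  shows "weakly_convergent_to (\<lambda>n. xs n + c) (x + c)"
  using assms unfolding weakly_convergent_to_def
  by (auto simp: blinfun.add_right intro: tendsto_add)

lemma weakly_seq_lsc_add:
  fixes f g :: "'a::real_normed_vector \<Rightarrow> real"
  assumes "weakly_seq_lsc f" and "weakly_seq_lsc g"
  shows "weakly_seq_lsc (\<lambda>x. f x + g x)"
  unfolding weakly_seq_lsc_def
proof (intro allI impI)
  fix xs :: "nat \<Rightarrow> 'a" and x assume wc: "weakly_convergent_to xs x"
  let ?u = "\<lambda>n. ereal (f (xs n))" and ?v = "\<lambda>n. ereal (g (xs n))"
  have u: "ereal (f x) \<le> liminf ?u" and v: "ereal (g x) \<le> liminf ?v"
    using assms wc unfolding weakly_seq_lsc_def by blast+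
  then have "liminf ?u \<noteq> -\<infinity>" "liminf ?v \<noteq> -\<infinity>" by auto
  then have "liminf ?u + liminf ?v \<le> liminf (\<lambda>n. ?u n + ?v n)"
    by (intro ereal_liminf_add_mono) auto
  moreover have "ereal (f x) + ereal (g x) \<le> liminf ?u + liminf ?v"
    using u v by (rule add_mono)
  ultimately show "ereal (f x + g x) \<le> liminf (\<lambda>n. ereal (f (xs n) + g (xs n)))"
    by simp
qed

lemma weakly_seq_lsc_cmult:
  fixes f :: "'a::real_normed_vector \<Rightarrow> real"
  assumes "weakly_seq_lsc f" and "0 \<le> c"
  shows "weakly_seq_lsc (\<lambda>x. c * f x)"
  unfolding weakly_seq_lsc_def
proof (intro allI impI)
  fix xs :: "nat \<Rightarrow> 'a" and x assume "weakly_convergent_to xs x"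
  then have "ereal c * ereal (f x) \<le> ereal c * liminf (\<lambda>n. ereal (f (xs n)))"
    using assms unfolding weakly_seq_lsc_def by (intro ereal_mult_left_mono) auto
  also have "\<dots> = liminf (\<lambda>n. ereal c * ereal (f (xs n)))"
    using Liminf_ereal_mult_left[of sequentially c "\<lambda>n. ereal (f (xs n))"] \<open>0 \<le> c\<close> by simp
  finally show "ereal (c * f x) \<le> liminf (\<lambda>n. ereal (c * f (xs n)))"
    by simp
qed

lemma weakly_seq_lsc_compose_affine:
  fixes f :: "'b::real_normed_vector \<Rightarrow> real" and L :: "'a::real_normed_vector \<Rightarrow> 'b"
  assumes f: "weakly_seq_lsc f" and L: "bounded_linear L"
  shows "weakly_seq_lsc (\<lambda>x. f (L x + c))"
  unfolding weakly_seq_lsc_def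
proof (intro allI impI)
  fix xs :: "nat \<Rightarrow> 'a" and x assume "weakly_convergent_to xs x"
  then have "weakly_convergent_to (\<lambda>n. L (xs n) + c) (L x + c)"
    by (intro weakly_convergent_to_add_const weakly_convergent_to_bounded_linear_image[OF L])
  then show "ereal (f (L x + c)) \<le> liminf (\<lambda>n. ereal (f (L (xs n) + c)))"
    using f unfolding weakly_seq_lsc_def by blast
qed

lemma weakly_seq_lsc_imp_closed_sublevel:
  fixes f :: "'a::real_normed_vector \<Rightarrow> real"
  assumes "weakly_seq_lsc f"
  shows "closed {x. f x \<le> c}"
  unfolding closed_sequential_limits
proof (intro allI impI)
  fix xs :: "nat \<Rightarrow> 'a" and x assume "(\<forall>n. xs n \<in> {x. f x \<le> c}) \<and> xs \<longlonglongrightarrow> x"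
  then have le: "\<And>n. ereal (f (xs n)) \<le> ereal c" and "xs \<longlonglongrightarrow> x" by auto
  have "ereal (f x) \<le> liminf (\<lambda>n. ereal (f (xs n)))"
    using assms LIMSEQ_imp_weakly_convergent_to[OF \<open>xs \<longlonglongrightarrow> x\<close>]
    unfolding weakly_seq_lsc_def by blast
  also have "\<dots> \<le> liminf (\<lambda>n. ereal c)"
    using le by (intro Liminf_mono always_eventually) auto
  also have "\<dots> = ereal c" by (simp add: Liminf_const)
  finally show "x \<in> {x. f x \<le> c}" by simp
qed

lemma weakly_seq_lsc_regularized:
  fixes R :: "'a::real_normed_vector \<Rightarrow> real" and D :: "'b::real_normed_vector \<Rightarrow> 'b \<Rightarrow> real"
  assumes "weakly_seq_lsc R" and "weakly_seq_lsc (\<lambda>(y1, y2). D y1 y2)"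
    and "bounded_linear A" and "0 \<le> \<alpha>"
  shows "weakly_seq_lsc (\<lambda>x. \<alpha> * R x + D (A x) y)"
proof -
  have "weakly_seq_lsc (\<lambda>x. D (A x) y)"
    using weakly_seq_lsc_compose_affine[OF assms(2) bounded_linear_Pair[OF assms(3)
        bounded_linear_zero], of "(0, y)"] by simp
  then show ?thesis
    using assms(4) by (intro weakly_seq_lsc_add weakly_seq_lsc_cmult[OF assms(1)])
qed

section \<open>Coercivity and existence of minimizers\<close>

lemma closed_sublevels_imp_bounded_on_ball:
  fixes f :: "'a::banach \<Rightarrow> real"
  assumes closed: "\<And>c. closed {x. f x \<le> c}"
  obtains x0 \<rho> K where "\<And>x. x \<in> ball x0 \<rho> \<Longrightarrow> f x \<le> K" and "0 < \<rho>"
proof -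
  define \<G> where "\<G> = range (\<lambda>k::nat. {x. f x \<le> real k})"
  have "\<Union>\<G> = UNIV"
    unfolding \<G>_def by (auto intro: real_arch_simple)
  then have "euclidean interior_of \<Union>\<G> \<noteq> {}" by simp
  then obtain k where "euclidean interior_of {x. f x \<le> real k} \<noteq> {}"
    using Baire_category_alt[OF disjI1[OF completely_metrizable_space_euclidean], of \<G>]
      closed unfolding \<G>_def by auto
  then obtain x0 \<rho> where "0 < \<rho>" "ball x0 \<rho> \<subseteq> {x. f x \<le> real k}"
    by (auto simp: mem_interior)
  then show ?thesis using that by blast
qed

lemma convex_on_lower_bound_on_ball:
  fixes g :: "'a::real_normed_vector \<Rightarrow> real"
  assumes "convex_on UNIV g" and upper: "\<And>x. x \<in> ball x0 \<rho> \<Longrightarrow> g x \<le> K"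
    and "x \<in> ball x0 \<rho>"
  shows "2 * g x0 - K \<le> g x"
proof -
  \<comment> \<open>\<open>x0\<close> is the midpoint of \<open>x\<close> and its reflection, which also lies in the ball\<close>
  have "g x0 = g ((1 / 2) *\<^sub>R x + (1 / 2) *\<^sub>R (2 *\<^sub>R x0 - x))"
    by (simp add: algebra_simps)
  also have "\<dots> \<le> (1 / 2) * g x + (1 / 2) * g (2 *\<^sub>R x0 - x)"
    using convex_onD[OF assms(1), of "1 / 2"] by simp
  also have "g (2 *\<^sub>R x0 - x) \<le> K"
  proof (rule upper)
    have "x0 - (2 *\<^sub>R x0 - x) = - (x0 - x)" by (simp add: algebra_simps scaleR_2)
    then have "dist x0 (2 *\<^sub>R x0 - x) = dist x0 x"
      unfolding dist_norm by (metis norm_minus_cancel)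
    then show "2 *\<^sub>R x0 - x \<in> ball x0 \<rho>"
      using \<open>x \<in> ball x0 \<rho>\<close> by simp
  qed
  finally show ?thesis by simp
qed

lemma convex_on_bounded_above_on_ball_imp_minorant:
  fixes g :: "'a::real_normed_vector \<Rightarrow> real"
  assumes convex: "convex_on UNIV g" and "0 < \<rho>"
    and upper: "\<And>x. x \<in> ball x0 \<rho> \<Longrightarrow> g x \<le> K"
  obtains C0 C1 where "\<And>x. - C0 - C1 * norm x \<le> g x"
proof -
  define r where "r = \<rho> / 2"
  define L where "L = K - g x0"
  have r: "0 < r" "r < \<rho>" using \<open>0 < \<rho>\<close> unfolding r_def by auto
  have L: "0 \<le> L" using upper[of x0] \<open>0 < \<rho>\<close> unfolding L_def by simp
  have near: "g x0 - L \<le> g x" if "x \<in> ball x0 \<rho>" for x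
    using convex_on_lower_bound_on_ball[OF convex upper that] unfolding L_def by simp
  have lower: "g x0 - L - L / r * norm (x - x0) \<le> g x" for x
  proof (cases "norm (x - x0) < r")
    case True
    then have "x \<in> ball x0 \<rho>" using r by (simp add: dist_norm norm_minus_commute)
    moreover have "0 \<le> L / r * norm (x - x0)" using L r by simp
    ultimately show ?thesis using near[of x] by linarith
  next
    case False
    define t where "t = r / norm (x - x0)"
    have n: "0 < norm (x - x0)" "r \<le> norm (x - x0)" using False r by auto
    then have t: "0 < t" "t \<le> 1" using r unfolding t_def by (auto simp: divide_le_eq_1)
    define w where "w = (1 - t) *\<^sub>R x0 + t *\<^sub>R x"
    have "norm (w - x0) = t * norm (x - x0)"
      unfolding w_def using t by (simp add: algebra_simps flip: scaleR_diff_right)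
    then have "w \<in> ball x0 \<rho>"
      using n r unfolding t_def by (simp add: dist_norm norm_minus_commute)
    then have "g x0 - L \<le> (1 - t) * g x0 + t * g x"
      using near convex_onD[OF convex, of t x0 x] t unfolding w_def by fastforce
    then have "g x0 - L / t \<le> g x"
      using t by (simp add: field_simps)
    moreover have "L / t = L / r * norm (x - x0)"
      using n unfolding t_def by (simp add: field_simps)
    ultimately show ?thesis using L by simp
  qed
  have triangle: "L / r * norm (x - x0) \<le> L / r * norm x + L / r * norm x0" for x
    using L r mult_left_mono[OF norm_triangle_ineq4[of x x0], of "L / r"]
    by (simp add: distrib_left)
  have "- (L - g x0 + L / r * norm x0) - L / r * norm x \<le> g x" for x
    using lower[of x] triangle[of x] by linarith
  then show ?thesis using that by blast
qed

lemma quadratic_minorant_above_strongly_convex: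
  fixes f g :: "'a::banach \<Rightarrow> real"
  assumes closed: "\<And>c. closed {x. f x \<le> c}" and sc: "strongly_convex \<mu> g"
    and le: "\<And>x. g x \<le> f x"
  obtains C0 C1 where "\<And>x. \<mu> / 2 * (norm x)\<^sup>2 - C1 * norm x - C0 \<le> f x"
proof -
  obtain x0 \<rho> K where f_ball: "\<And>x. x \<in> ball x0 \<rho> \<Longrightarrow> f x \<le> K" and "0 < \<rho>"
    using closed_sublevels_imp_bounded_on_ball[OF closed] by blast
  have "0 < \<mu>" and convex: "convex_on UNIV (\<lambda>x. g x - \<mu> / 2 * (norm x)\<^sup>2)"
    using sc unfolding strongly_convex_def rho_convex_def by auto
  have "g x - \<mu> / 2 * (norm x)\<^sup>2 \<le> K" if "x \<in> ball x0 \<rho>" for x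
  proof -
    have "0 \<le> \<mu> / 2 * (norm x)\<^sup>2" using \<open>0 < \<mu>\<close> by simp
    then show ?thesis using le[of x] f_ball[OF that] by linarith
  qed
  then obtain C0 C1 where C: "\<And>x. - C0 - C1 * norm x \<le> g x - \<mu> / 2 * (norm x)\<^sup>2"
    using convex_on_bounded_above_on_ball_imp_minorant[OF convex \<open>0 < \<rho>\<close>] by blast
  have "\<mu> / 2 * (norm x)\<^sup>2 - C1 * norm x - C0 \<le> f x" for x
    using C[of x] le[of x] by linarith
  then show ?thesis using that by blast
qed

lemma bounded_sublevel_if_quadratic_minorant:
  fixes J :: "'a::real_normed_vector \<Rightarrow> real"
  assumes "0 < a" and minorant: "\<And>x. a * (norm x)\<^sup>2 - b * norm x - c \<le> J x"
  shows "bounded {x. J x \<le> d}"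
proof -
  define M where "M = \<bar>b\<bar> + \<bar>c + d\<bar>"
  have "norm x \<le> max 1 (M / a)" if "J x \<le> d" for x
  proof (rule ccontr)
    assume "\<not> ?thesis"
    then have "1 < norm x" "M / a < norm x" by auto
    then have "1 < norm x" "M < a * norm x"
      using \<open>0 < a\<close> by (auto simp: pos_divide_less_eq mult.commute)
    then have "M * norm x < (a * norm x) * norm x"
      by (intro mult_strict_right_mono) auto
    then have "M * norm x < a * (norm x)\<^sup>2"
      by (simp add: power2_eq_square mult.assoc)
    moreover have "b * norm x + (c + d) \<le> M * norm x"
    proof -
      have "\<bar>c + d\<bar> \<le> \<bar>c + d\<bar> * norm x"
        using \<open>1 < norm x\<close> by (simp add: mult_le_cancel_left1)
      then show ?thesis unfolding M_def
        by (smt (verit) abs_ge_self abs_mult_pos distrib_right mult_right_mono norm_ge_zero)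
    qed
    ultimately show False using minorant[of x] \<open>J x \<le> d\<close> by linarith
  qed
  then show ?thesis unfolding bounded_iff by blast
qed

lemma weakly_seq_lsc_coercive_has_minimizer:
  fixes J :: "'a::real_normed_vector \<Rightarrow> real"
  assumes refl: "reflexive_space TYPE('a)" and lsc: "weakly_seq_lsc J"
    and below: "bdd_below (range J)" and coercive: "\<And>c. bounded {x. J x \<le> c}"
  obtains x where "\<And>y. J x \<le> J y"
proof -
  define m where "m = Inf (range J)"
  have m_le: "m \<le> J y" for y
    unfolding m_def using below by (intro cInf_lower) auto
  have "\<exists>x. J x < m + inverse (real (Suc n))" for n
    using cInf_lessD[of "range J" "m + inverse (real (Suc n))"] unfolding m_def by auto
  then obtain xs where xs: "\<And>n. J (xs n) < m + inverse (real (Suc n))" by metis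
  have lim: "(\<lambda>n. J (xs n)) \<longlonglongrightarrow> m"
    by (rule tendsto_sandwich[OF _ _ tendsto_const LIMSEQ_inverse_real_of_nat_add])
      (use m_le xs in \<open>auto intro!: always_eventually less_imp_le\<close>)
  obtain B where "\<forall>n. norm (xs n) \<le> B"
  proof -
    have "xs n \<in> {x. J x \<le> m + 1}" for n
    proof -
      have "inverse (real (Suc n)) \<le> 1" by (simp add: inverse_le_1_iff)
      then show ?thesis using xs[of n] by simp
    qed
    then show ?thesis using coercive[of "m + 1"] that unfolding bounded_iff by blast
  qed
  then obtain r x where "strict_mono r" and wc: "weakly_convergent_to (xs \<circ> r) x"
    using reflexive_bounded_seq_weakly_convergent_subseq[OF refl] by blast
  have "ereal (J x) \<le> liminf (\<lambda>k. ereal (J ((xs \<circ> r) k)))"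
    using lsc wc unfolding weakly_seq_lsc_def by blast
  also have "\<dots> = ereal m"
    using LIMSEQ_subseq_LIMSEQ[OF lim \<open>strict_mono r\<close>]
    by (intro lim_imp_Liminf) (auto simp: o_def)
  finally have "J x \<le> m" by simp
  then have "J x \<le> J y" for y using m_le[of y] by linarith
  then show ?thesis by (rule that)
qed

lemma minimizer_imp_critical_point:
  assumes "\<And>y. f x \<le> f y"
  shows "critical_point f x"
  unfolding critical_point_def frechet_subdiff_def
proof (intro CollectI allI impI always_eventually)
  fix \<epsilon> :: real and y assume "0 < \<epsilon>"
  then have "0 \<le> \<epsilon> * norm (y - x)" by simp
  then show "f x + blinfun_apply 0 (y - x) - \<epsilon> * norm (y - x) \<le> f y"
    using assms[of y] by simp
qed

theorem mainTheorem2: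
  fixes A :: "'x::banach \<Rightarrow> 'y::banach"
    and R Rwc Rsc :: "'x \<Rightarrow> real"
    and D :: "'y \<Rightarrow> 'y \<Rightarrow> real"
    and \<gamma> \<mu> :: real
  assumes A_lin: "bounded_linear A"
    and R_nonneg: "\<And>x. R x \<ge> 0"
    and D_nonneg: "\<And>y1 y2. D y1 y2 \<ge> 0"
    and refl: "reflexive_space TYPE('x)"
    and R_lsc: "weakly_seq_lsc R"
    and R_split: "R = (\<lambda>x. Rwc x + Rsc x)"
    and Rwc_nonneg: "\<And>x. Rwc x \<ge> 0"
    and Rwc_wc: "weakly_convex \<gamma> Rwc"
    and Rsc_sc: "strongly_convex \<mu> Rsc"
    and gamma_mu: "\<gamma> \<le> \<mu> \<or>
        (\<mu> < \<gamma> \<and> \<gamma> < 2 * \<mu> \<and> weakly_seq_lsc (\<lambda>x. Rsc x - \<mu> / 2 * (norm x)\<^sup>2))"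
    and D_lsc: "weakly_seq_lsc (\<lambda>(y1, y2). D y1 y2)"
    and D_convex: "\<And>y2. convex_on UNIV (\<lambda>y1. D y1 y2)"
    and D_cont: "\<And>y1. continuous_on UNIV (\<lambda>y2. D y1 y2)"
    and D_zero: "\<And>y1 y2. D y1 y2 = 0 \<longleftrightarrow> y1 = y2"
    and D_tri: "\<exists>C>0. \<exists>p\<ge>1. \<forall>y1 y2 y3.
        D y1 y2 \<le> C * (D y1 y3 + norm (y2 - y3) powr p)"
  shows "\<forall>\<alpha>>0. \<forall>y\<delta>. \<exists>x. critical_point (\<lambda>x. \<alpha> * R x + D (A x) y\<delta>) x"
proof (intro allI impI)
  fix \<alpha> :: real and y\<delta> :: 'y
  assume "0 < \<alpha>"
  define J where "J = (\<lambda>x. \<alpha> * R x + D (A x) y\<delta>)"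
  have lsc: "weakly_seq_lsc J"
    unfolding J_def using weakly_seq_lsc_regularized[OF R_lsc D_lsc A_lin] \<open>0 < \<alpha>\<close> by simp
  have "0 < \<mu>" using Rsc_sc unfolding strongly_convex_def by simp
  have "Rsc x \<le> R x" for x using R_split Rwc_nonneg[of x] by simp
  then obtain C0 C1 where C: "\<And>x. \<mu> / 2 * (norm x)\<^sup>2 - C1 * norm x - C0 \<le> R x"
    using quadratic_minorant_above_strongly_convex[OF weakly_seq_lsc_imp_closed_sublevel[OF R_lsc]
        Rsc_sc] by blast
  have "(\<alpha> * \<mu> / 2) * (norm x)\<^sup>2 - (\<alpha> * C1) * norm x - \<alpha> * C0 \<le> J x" for x
    using mult_left_mono[OF C[of x], of \<alpha>] \<open>0 < \<alpha>\<close> D_nonneg[of "A x" y\<delta>]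
    unfolding J_def by (simp add: algebra_simps)
  then have "bounded {x. J x \<le> c}" for c
    by (rule bounded_sublevel_if_quadratic_minorant[rotated]) (use \<open>0 < \<alpha>\<close> \<open>0 < \<mu>\<close> in simp)
  moreover have "bdd_below (range J)"
    unfolding J_def using R_nonneg D_nonneg \<open>0 < \<alpha>\<close> by (intro bdd_belowI2[of _ 0]) simp
  ultimately obtain x where "\<And>y. J x \<le> J y"
    using weakly_seq_lsc_coercive_has_minimizer[OF refl lsc] by blast
  then have "critical_point J x" by (rule minimizer_imp_critical_point)
  then show "\<exists>x. critical_point (\<lambda>x. \<alpha> * R x + D (A x) y\<delta>) x"
    unfolding J_def by blast
qed

end
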